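(* Let $m,n,s,k,c$ be positive integers such that $2\leq s\leq n$, $2\leq k\leq m$ and $ms=nk$. Let $\Omega$ be a subset of size $nkc$ of an abelian group $\Gamma$, and set $d=\gcd(s,k)$. If there exists a diagonal $\mathrm{MS}_\Omega(\frac{nk}{d},\frac{nk}{d};d,d;c)$, then there exists an $\mathrm{MS}_\Omega(m,n;s,k;c)$. In particular, if there exists a diagonal $\mathrm{MS}^0_\Omega(\frac{nk}{d},\frac{nk}{d};d,d;c)$, then there exists a $\mathrm{MS}^0_\Omega(m,n;s,k;c)$.
   Context: Let $(\Gamma,+)$ be an abelian group and $\Omega\subseteq\Gamma$ with $|\Omega|>1$. A partially filled array is an array in which some cells may be empty. A magic partially filled array set $\mathrm{MS}_\Omega(m,n;s,k;c)$ is a set of $c$ partially filled $m\times n$ arrays with entries in $\Omega$ such that every element of $\Omega$ appears exactly once in exactly one of the arrays, every array has $s$ filled cells in each row and $k$ in each column, and there exist $x,y\in\Gamma$ such that in every array each row sums to $x$ and each column sums to $y$; it is zero-sum, written $\mathrm{MS}^0_\Omega(m,n;s,k;c)$, if $x=y=0_\Gamma$. For an $N\times N$ partially filled array $A=(a_{i,j})$, the cell $(i,j)$ belongs to the diagonal $D_r$ if $j-i\equiv r\pmod N$; $A$ is $\ell$-diagonal if its nonempty cells are exactly the cells of $\ell$ consecutive diagonals $D_r,D_{r+1},\ldots,D_{r+\ell-1}$ (indices mod $N$). An $\mathrm{MS}_\Omega(N,N;d,d;c)$ is diagonal if every one of its arrays is $d$-diagonal. *)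

theory Defs
  imports Main
begin

text \<open>A partially filled m x n array with entries in type 'a is modelled as a function
  nat \<Rightarrow> nat \<Rightarrow> 'a option (row, column); None means empty cell.  Only the cells
  with i < m and j < n are relevant.  A family of c arrays is indexed by t < c.\<close>

type_synonym 'a pf_array = "nat \<Rightarrow> nat \<Rightarrow> 'a option"

definition row_cells :: "'a pf_array \<Rightarrow> nat \<Rightarrow> nat \<Rightarrow> nat set" where
  "row_cells A n i = {j. j < n \<and> A i j \<noteq> None}"

definition col_cells :: "'a pf_array \<Rightarrow> nat \<Rightarrow> nat \<Rightarrow> nat set" where
  "col_cells A m j = {i. i < m \<and> A i j \<noteq> None}"

text \<open>magic_set Omega m n s k c A x y: the family A 0, ..., A (c-1) is an
  MS_Omega(m,n;s,k;c) with row sums x and column sums y.\<close>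

definition magic_set ::
  "'a::ab_group_add set \<Rightarrow> nat \<Rightarrow> nat \<Rightarrow> nat \<Rightarrow> nat \<Rightarrow> nat \<Rightarrow> (nat \<Rightarrow> 'a pf_array) \<Rightarrow> 'a \<Rightarrow> 'a \<Rightarrow> bool"
  where
  "magic_set \<Omega> m n s k c A x y \<longleftrightarrow>
     (\<forall>t<c. \<forall>i<m. \<forall>j<n. \<forall>v. A t i j = Some v \<longrightarrow> v \<in> \<Omega>) \<and>
     (\<forall>v\<in>\<Omega>. \<exists>!(t, i, j). t < c \<and> i < m \<and> j < n \<and> A t i j = Some v) \<and>
     (\<forall>t<c. \<forall>i<m. card (row_cells (A t) n i) = s) \<and>
     (\<forall>t<c. \<forall>j<n. card (col_cells (A t) m j) = k) \<and>
     (\<forall>t<c. \<forall>i<m. (\<Sum>j\<in>row_cells (A t) n i. the (A t i j)) = x) \<and>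
     (\<forall>t<c. \<forall>j<n. (\<Sum>i\<in>col_cells (A t) m j. the (A t i j)) = y)"

definition exists_MS :: "'a::ab_group_add set \<Rightarrow> nat \<Rightarrow> nat \<Rightarrow> nat \<Rightarrow> nat \<Rightarrow> nat \<Rightarrow> bool" where
  "exists_MS \<Omega> m n s k c \<longleftrightarrow> (\<exists>A x y. magic_set \<Omega> m n s k c A x y)"

definition exists_MS0 :: "'a::ab_group_add set \<Rightarrow> nat \<Rightarrow> nat \<Rightarrow> nat \<Rightarrow> nat \<Rightarrow> nat \<Rightarrow> bool" where
  "exists_MS0 \<Omega> m n s k c \<longleftrightarrow> (\<exists>A. magic_set \<Omega> m n s k c A 0 0)"

definition on_diagonal :: "nat \<Rightarrow> int \<Rightarrow> nat \<Rightarrow> nat \<Rightarrow> bool" where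
  "on_diagonal N r i j \<longleftrightarrow> (int j - int i) mod int N = r mod int N"

definition is_diagonal_array :: "nat \<Rightarrow> nat \<Rightarrow> 'a pf_array \<Rightarrow> bool" where
  "is_diagonal_array N l A \<longleftrightarrow>
     (\<exists>r::int. \<forall>i<N. \<forall>j<N. A i j \<noteq> None \<longleftrightarrow> (\<exists>h<l. on_diagonal N (r + int h) i j))"

definition exists_diag_MS :: "'a::ab_group_add set \<Rightarrow> nat \<Rightarrow> nat \<Rightarrow> nat \<Rightarrow> bool" where
  "exists_diag_MS \<Omega> N d c \<longleftrightarrow>
     (\<exists>A x y. magic_set \<Omega> N N d d c A x y \<and> (\<forall>t<c. is_diagonal_array N d (A t)))"

definition exists_diag_MS0 :: "'a::ab_group_add set \<Rightarrow> nat \<Rightarrow> nat \<Rightarrow> nat \<Rightarrow> bool" where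
  "exists_diag_MS0 \<Omega> N d c \<longleftrightarrow>
     (\<exists>A. magic_set \<Omega> N N d d c A 0 0 \<and> (\<forall>t<c. is_diagonal_array N d (A t)))"

end

theory Submission
  imports Defs
begin

text \<open>Let d = gcd s k. The balance condition m s = n k makes N = n k / d equal to lcm m n,
  with N = m (s / d) = n (k / d), and s \<le> n gives d \<le> gcd m n. Fold an N \<times> N array by
  reducing row indices modulo m and column indices modulo n. On the cells of d consecutive
  diagonals this folding is injective: two cells with the same image have row and column
  differences divisible by m and n respectively, so their diagonal offsets agree modulo
  gcd m n \<ge> d and hence coincide; then both differences are divisible by lcm m n = N.
  A row of the folded m \<times> n array collects the N / m = s / d rows of the big array with the
  same residue, so it has s filled cells and its sum is s / d copies of the common row sum;
  likewise for columns.\<close>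

definition filled_cells :: "nat \<Rightarrow> 'a pf_array \<Rightarrow> (nat \<times> nat) set" where
  "filled_cells N B = {(i, j). i < N \<and> j < N \<and> B i j \<noteq> None}"

definition transpose_array :: "'a pf_array \<Rightarrow> 'a pf_array" where
  "transpose_array B = (\<lambda>i j. B j i)"

text \<open>The entry of cell (i, j) is moved to cell (f i, g j); this is only meaningful when
  map_prod f g is injective on the filled cells.\<close>

definition compress :: "nat \<Rightarrow> (nat \<Rightarrow> nat) \<Rightarrow> (nat \<Rightarrow> nat) \<Rightarrow> 'a pf_array \<Rightarrow> 'a pf_array" where
  "compress N f g B p q =
     (if (p, q) \<in> map_prod f g ` filled_cells N B
      then case_prod B (the_inv_into (filled_cells N B) (map_prod f g) (p, q))
      else None)"

lemma compress_at:
  assumes "inj_on (map_prod f g) (filled_cells N B)" "(i, j) \<in> filled_cells N B"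
  shows "compress N f g B (f i) (g j) = B i j"
proof -
  have "(f i, g j) \<in> map_prod f g ` filled_cells N B"
    using assms(2) by force
  moreover have "the_inv_into (filled_cells N B) (map_prod f g) (f i, g j) = (i, j)"
    using the_inv_into_f_f[OF assms] by simp
  ultimately show ?thesis
    unfolding compress_def by simp
qed

lemma compress_not_None:
  assumes "compress N f g B p q \<noteq> None"
  obtains i j where "(i, j) \<in> filled_cells N B" "f i = p" "g j = q"
  using assms unfolding compress_def by (auto split: if_splits)

lemma compress_eq_Some_iff:
  assumes inj: "inj_on (map_prod f g) (filled_cells N B)"
  shows "compress N f g B p q = Some v \<longleftrightarrow>
    (\<exists>i j. f i = p \<and> g j = q \<and> i < N \<and> j < N \<and> B i j = Some v)"
proof
  assume moved: "compress N f g B p q = Some v"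
  then obtain i j where ij: "(i, j) \<in> filled_cells N B" "f i = p" "g j = q"
    by (metis compress_not_None option.distinct(1))
  then show "\<exists>i j. f i = p \<and> g j = q \<and> i < N \<and> j < N \<and> B i j = Some v"
    using compress_at[OF inj ij(1)] moved unfolding filled_cells_def by auto
next
  assume "\<exists>i j. f i = p \<and> g j = q \<and> i < N \<and> j < N \<and> B i j = Some v"
  then obtain i j where "f i = p" "g j = q" "(i, j) \<in> filled_cells N B" "B i j = Some v"
    unfolding filled_cells_def by auto
  then show "compress N f g B p q = Some v"
    using compress_at[OF inj] by auto
qed

lemma ex1_compress_cell:
  assumes inj: "\<forall>t<c. inj_on (map_prod f g) (filled_cells N (A t))"
    and f: "\<forall>i<N. f i < m" and g: "\<forall>j<N. g j < n"
    and unique: "\<exists>!(t, i, j). t < c \<and> i < N \<and> j < N \<and> A t i j = Some v"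
  shows "\<exists>!(t, p, q). t < c \<and> p < m \<and> q < n \<and> compress N f g (A t) p q = Some v"
proof -
  have moved: "compress N f g (A t) p q = Some v \<longleftrightarrow>
      (\<exists>i j. f i = p \<and> g j = q \<and> i < N \<and> j < N \<and> A t i j = Some v)" if "t < c" for t p q
  proof -
    have "inj_on (map_prod f g) (filled_cells N (A t))"
      using inj that by blast
    from compress_eq_Some_iff[OF this] show ?thesis .
  qed
  obtain t i j where tij: "t < c" "i < N" "j < N" "A t i j = Some v"
    using unique by blast
  show ?thesis
  proof (rule ex1I[of _ "(t, f i, g j)"])
    show "case (t, f i, g j) of (t, p, q) \<Rightarrow> t < c \<and> p < m \<and> q < n \<and> compress N f g (A t) p q = Some v"
      using tij f g moved by auto
    fix z
    assume "case z of (t, p, q) \<Rightarrow> t < c \<and> p < m \<and> q < n \<and> compress N f g (A t) p q = Some v"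
    then obtain t' i' j' where "z = (t', f i', g j')" "t' < c" "i' < N" "j' < N" "A t' i' j' = Some v"
      using moved by (cases z) auto
    then show "z = (t, f i, g j)"
      using unique tij by auto
  qed
qed

lemma filled_cells_transpose_array [simp]:
  "(i, j) \<in> filled_cells N (transpose_array B) \<longleftrightarrow> (j, i) \<in> filled_cells N B"
  unfolding filled_cells_def transpose_array_def by auto

lemma inj_on_map_prod_transpose_array:
  assumes "inj_on (map_prod f g) (filled_cells N B)"
  shows "inj_on (map_prod g f) (filled_cells N (transpose_array B))"
  using assms unfolding inj_on_def by fastforce

lemma compress_transpose_array:
  assumes inj: "inj_on (map_prod f g) (filled_cells N B)"
  shows "compress N g f (transpose_array B) = transpose_array (compress N f g B)"
proof (intro ext)
  fix q p
  show "compress N g f (transpose_array B) q p = transpose_array (compress N f g B) q p"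
  proof (cases "\<exists>i j. (i, j) \<in> filled_cells N B \<and> f i = p \<and> g j = q")
    case True
    then obtain i j where ij: "(i, j) \<in> filled_cells N B" "f i = p" "g j = q" by blast
    then have "(j, i) \<in> filled_cells N (transpose_array B)" by simp
    then show ?thesis
      using ij compress_at[OF inj ij(1)] compress_at[OF inj_on_map_prod_transpose_array[OF inj]]
      by (auto simp: transpose_array_def)
  next
    case False
    then show ?thesis
      by (metis compress_not_None filled_cells_transpose_array transpose_array_def)
  qed
qed

lemma col_cells_eq_row_cells_transpose_array:
  "col_cells B m j = row_cells (transpose_array B) m j"
  unfolding col_cells_def row_cells_def transpose_array_def ..

lemma row_cells_compress_bij:
  assumes inj: "inj_on (map_prod f g) (filled_cells N B)" and g: "\<forall>j<N. g j < n"
  shows "bij_betw (g \<circ> snd) (SIGMA i:{i. i < N \<and> f i = p}. row_cells B N i)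
           (row_cells (compress N f g B) n p)"
proof (rule bij_betw_imageI)
  have filled: "(SIGMA i:{i. i < N \<and> f i = p}. row_cells B N i) \<subseteq> filled_cells N B"
    unfolding filled_cells_def row_cells_def by auto
  show "inj_on (g \<circ> snd) (SIGMA i:{i. i < N \<and> f i = p}. row_cells B N i)"
  proof (rule inj_onI)
    fix x y
    assume "x \<in> (SIGMA i:{i. i < N \<and> f i = p}. row_cells B N i)"
      "y \<in> (SIGMA i:{i. i < N \<and> f i = p}. row_cells B N i)" "(g \<circ> snd) x = (g \<circ> snd) y"
    then show "x = y"
      using inj_onD[OF inj, of x y] filled by (cases x, cases y) auto
  qed
  show "(g \<circ> snd) ` (SIGMA i:{i. i < N \<and> f i = p}. row_cells B N i) = row_cells (compress N f g B) n p"
  proof (intro equalityI subsetI)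
    fix q assume "q \<in> (g \<circ> snd) ` (SIGMA i:{i. i < N \<and> f i = p}. row_cells B N i)"
    then obtain i j where "(i, j) \<in> filled_cells N B" "f i = p" "q = g j"
      using filled by force
    then show "q \<in> row_cells (compress N f g B) n p"
      using compress_at[OF inj] g unfolding row_cells_def filled_cells_def by auto
  next
    fix q assume "q \<in> row_cells (compress N f g B) n p"
    then obtain i j where "(i, j) \<in> filled_cells N B" "f i = p" "g j = q"
      unfolding row_cells_def by (metis (mono_tags) compress_not_None mem_Collect_eq)
    then show "q \<in> (g \<circ> snd) ` (SIGMA i:{i. i < N \<and> f i = p}. row_cells B N i)"
      unfolding filled_cells_def row_cells_def by force
  qed
qed

lemma sum_const_eq_if_card_eq:
  fixes x :: "'a::comm_monoid_add"
  assumes "finite A" "finite B" "card A = card B"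
  shows "(\<Sum>_\<in>A. x) = (\<Sum>_\<in>B. x)"
proof -
  obtain h where "bij_betw h A B"
    using assms finite_same_card_bij by blast
  then show ?thesis
    using sum.reindex_bij_betw[of h A B "\<lambda>_. x"] by simp
qed

lemma compress_row:
  assumes inj: "inj_on (map_prod f g) (filled_cells N B)" and g: "\<forall>j<N. g j < n"
    and row_card: "\<forall>i<N. card (row_cells B N i) = d"
    and row_sum: "\<forall>i<N. (\<Sum>j\<in>row_cells B N i. the (B i j)) = x"
    and fibre: "card {i. i < N \<and> f i = p} = a"
  shows "card (row_cells (compress N f g B) n p) = a * d"
    and "(\<Sum>q\<in>row_cells (compress N f g B) n p. the (compress N f g B p q)) = (\<Sum>_\<in>{..<a}. x)"
proof -
  let ?F = "{i. i < N \<and> f i = p}"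
  let ?S = "SIGMA i:?F. row_cells B N i"
  have bij: "bij_betw (g \<circ> snd) ?S (row_cells (compress N f g B) n p)"
    using row_cells_compress_bij[OF inj g] .
  have fin: "finite ?F" "\<And>i. finite (row_cells B N i)"
    unfolding row_cells_def by auto
  have "card (row_cells (compress N f g B) n p) = card ?S"
    using bij_betw_same_card[OF bij] by simp
  also have "\<dots> = (\<Sum>i\<in>?F. card (row_cells B N i))"
    using fin by (simp add: card_SigmaI)
  also have "\<dots> = a * d"
    using row_card fibre by simp
  finally show "card (row_cells (compress N f g B) n p) = a * d" .
  have "(\<Sum>q\<in>row_cells (compress N f g B) n p. the (compress N f g B p q))
      = (\<Sum>(i, j)\<in>?S. the (compress N f g B p (g j)))"
    using sum.reindex_bij_betw[OF bij, of "\<lambda>q. the (compress N f g B p q)"]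
    by (simp add: case_prod_beta')
  also have "\<dots> = (\<Sum>(i, j)\<in>?S. the (B i j))"
    using compress_at[OF inj] by (intro sum.cong) (auto simp: filled_cells_def row_cells_def)
  also have "\<dots> = (\<Sum>i\<in>?F. x)"
    using fin row_sum by (simp add: sum.Sigma[symmetric])
  also have "\<dots> = (\<Sum>_\<in>{..<a}. x)"
    using fibre fin by (intro sum_const_eq_if_card_eq) auto
  finally show "(\<Sum>q\<in>row_cells (compress N f g B) n p. the (compress N f g B p q)) = (\<Sum>_\<in>{..<a}. x)" .
qed

lemma compress_col:
  assumes inj: "inj_on (map_prod f g) (filled_cells N B)" and f: "\<forall>i<N. f i < m"
    and col_card: "\<forall>j<N. card (col_cells B N j) = d"
    and col_sum: "\<forall>j<N. (\<Sum>i\<in>col_cells B N j. the (B i j)) = y"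
    and fibre: "card {j. j < N \<and> g j = q} = b"
  shows "card (col_cells (compress N f g B) m q) = b * d"
    and "(\<Sum>p\<in>col_cells (compress N f g B) m q. the (compress N f g B p q)) = (\<Sum>_\<in>{..<b}. y)"
proof -
  have inj': "inj_on (map_prod g f) (filled_cells N (transpose_array B))"
    using inj_on_map_prod_transpose_array[OF inj] .
  have "\<forall>j<N. card (row_cells (transpose_array B) N j) = d"
    "\<forall>j<N. (\<Sum>i\<in>row_cells (transpose_array B) N j. the (transpose_array B j i)) = y"
    using col_card col_sum
    by (simp_all add: col_cells_eq_row_cells_transpose_array, simp add: transpose_array_def)
  note transposed = compress_row[OF inj' f this fibre]
  show "card (col_cells (compress N f g B) m q) = b * d"
    using transposed(1)
    by (simp add: compress_transpose_array[OF inj] col_cells_eq_row_cells_transpose_array)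
  show "(\<Sum>p\<in>col_cells (compress N f g B) m q. the (compress N f g B p q)) = (\<Sum>_\<in>{..<b}. y)"
    using transposed(2)
    by (simp add: compress_transpose_array[OF inj] col_cells_eq_row_cells_transpose_array,
        simp add: transpose_array_def)
qed

lemma magic_set_compress:
  fixes A :: "nat \<Rightarrow> 'a::ab_group_add pf_array"
  assumes ms: "magic_set \<Omega> N N d d c A x y"
    and f: "\<forall>i<N. f i < m" and g: "\<forall>j<N. g j < n"
    and fibre_f: "\<forall>p<m. card {i. i < N \<and> f i = p} = a"
    and fibre_g: "\<forall>q<n. card {j. j < N \<and> g j = q} = b"
    and inj: "\<forall>t<c. inj_on (map_prod f g) (filled_cells N (A t))"
  shows "magic_set \<Omega> m n (a * d) (b * d) c (\<lambda>t. compress N f g (A t))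
           (\<Sum>_\<in>{..<a}. x) (\<Sum>_\<in>{..<b}. y)"
proof -
  from ms have entries: "\<forall>t<c. \<forall>i<N. \<forall>j<N. \<forall>v. A t i j = Some v \<longrightarrow> v \<in> \<Omega>"
    and unique: "\<forall>v\<in>\<Omega>. \<exists>!(t, i, j). t < c \<and> i < N \<and> j < N \<and> A t i j = Some v"
    and row_card: "\<forall>t<c. \<forall>i<N. card (row_cells (A t) N i) = d"
    and col_card: "\<forall>t<c. \<forall>j<N. card (col_cells (A t) N j) = d"
    and row_sum: "\<forall>t<c. \<forall>i<N. (\<Sum>j\<in>row_cells (A t) N i. the (A t i j)) = x"
    and col_sum: "\<forall>t<c. \<forall>j<N. (\<Sum>i\<in>col_cells (A t) N j. the (A t i j)) = y"
    unfolding magic_set_def by auto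
  have compressed_row:
    "card (row_cells (compress N f g (A t)) n p) = a * d \<and>
     (\<Sum>q\<in>row_cells (compress N f g (A t)) n p. the (compress N f g (A t) p q)) = (\<Sum>_\<in>{..<a}. x)"
    if "t < c" "p < m" for t p
    using compress_row[of f g N "A t" n d x p a] that inj g row_card row_sum fibre_f by simp
  have compressed_col:
    "card (col_cells (compress N f g (A t)) m q) = b * d \<and>
     (\<Sum>p\<in>col_cells (compress N f g (A t)) m q. the (compress N f g (A t) p q)) = (\<Sum>_\<in>{..<b}. y)"
    if "t < c" "q < n" for t q
    using compress_col[of f g N "A t" m d y q b] that inj f col_card col_sum fibre_g by simp
  show ?thesis
    unfolding magic_set_def
  proof (intro conjI)
    show "\<forall>t<c. \<forall>p<m. \<forall>q<n. \<forall>v. compress N f g (A t) p q = Some v \<longrightarrow> v \<in> \<Omega>"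
    proof (intro allI impI)
      fix t p q v
      assume "t < c" "p < m" "q < n" "compress N f g (A t) p q = Some v"
      moreover have "inj_on (map_prod f g) (filled_cells N (A t))"
        using inj \<open>t < c\<close> by blast
      ultimately show "v \<in> \<Omega>"
        using entries by (auto simp: compress_eq_Some_iff)
    qed
    show "\<forall>v\<in>\<Omega>. \<exists>!(t, p, q). t < c \<and> p < m \<and> q < n \<and> compress N f g (A t) p q = Some v"
    proof
      fix v assume "v \<in> \<Omega>"
      with unique show "\<exists>!(t, p, q). t < c \<and> p < m \<and> q < n \<and> compress N f g (A t) p q = Some v"
        by (intro ex1_compress_cell[OF inj f g]) blast
    qed
    show "\<forall>t<c. \<forall>p<m. card (row_cells (compress N f g (A t)) n p) = a * d"
      using compressed_row by blast
    show "\<forall>t<c. \<forall>q<n. card (col_cells (compress N f g (A t)) m q) = b * d"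
      using compressed_col by blast
    show "\<forall>t<c. \<forall>p<m. (\<Sum>q\<in>row_cells (compress N f g (A t)) n p. the (compress N f g (A t) p q))
        = (\<Sum>_\<in>{..<a}. x)"
      using compressed_row by blast
    show "\<forall>t<c. \<forall>q<n. (\<Sum>p\<in>col_cells (compress N f g (A t)) m q. the (compress N f g (A t) p q))
        = (\<Sum>_\<in>{..<b}. y)"
      using compressed_col by blast
  qed
qed

lemma card_mod_fibre:
  fixes N m p :: nat
  assumes "m dvd N" "p < m"
  shows "card {i. i < N \<and> i mod m = p} = N div m"
proof -
  obtain q where N: "N = q * m"
    using assms(1) by (metis dvd_def mult.commute)
  have "{i. i < N \<and> i mod m = p} = (\<lambda>t. t * m + p) ` {..<q}"
  proof (intro equalityI subsetI)
    fix i assume "i \<in> {i. i < N \<and> i mod m = p}"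
    then have "i = i div m * m + p" "i div m < q"
      unfolding N by (auto intro: less_mult_imp_div_less)
    then show "i \<in> (\<lambda>t. t * m + p) ` {..<q}" by blast
  next
    fix i assume "i \<in> (\<lambda>t. t * m + p) ` {..<q}"
    then obtain t where t: "t < q" "i = t * m + p" by blast
    have "t * m + p < Suc t * m" using assms(2) by simp
    also have "\<dots> \<le> q * m" using t(1) by (intro mult_right_mono) auto
    finally show "i \<in> {i. i < N \<and> i mod m = p}" using t assms(2) N by simp
  qed
  moreover have "inj_on (\<lambda>t. t * m + p) {..<q}"
    using assms(2) by (auto intro!: inj_onI)
  ultimately show ?thesis
    using assms(2) N by (simp add: card_image)
qed

lemma dvd_abs_less_imp_eq_0:
  fixes D a :: int
  assumes "D dvd a" "\<bar>a\<bar> < D"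
  shows "a = 0"
proof (rule ccontr)
  assume "a \<noteq> 0"
  then have "\<bar>D\<bar> \<le> \<bar>a\<bar>"
    using dvd_imp_le_int assms(1) by blast
  then show False
    using assms(2) by linarith
qed

lemma gcd_dvd_if_lcm_dvd_diff:
  fixes m n a b e :: "'a::ring_gcd"
  assumes "m dvd a" "n dvd b" "lcm m n dvd b - a - e"
  shows "gcd m n dvd e"
proof -
  have "gcd m n dvd lcm m n" "gcd m n dvd a" "gcd m n dvd b"
    using dvd_trans[OF gcd_dvd1 dvd_lcm1] dvd_trans[OF gcd_dvd1 assms(1)] dvd_trans[OF gcd_dvd2 assms(2)] .
  then have "gcd m n dvd (b - a) - (b - a - e)"
    using dvd_diff[OF dvd_diff dvd_trans[OF _ assms(3)]] by blast
  then show ?thesis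
    by simp
qed

lemma lcm_dvd_if_lcm_dvd_diff:
  fixes m n a b :: "'a::ring_gcd"
  assumes a: "m dvd a" and b: "n dvd b" and diff: "lcm m n dvd b - a"
  shows "lcm m n dvd a" and "lcm m n dvd b"
proof -
  have "m dvd (b - a) + a" "n dvd b - (b - a)"
    using dvd_add[OF dvd_trans[OF dvd_lcm1 diff] a] dvd_diff[OF b dvd_trans[OF dvd_lcm2 diff]] .
  then have "m dvd b" "n dvd a"
    by simp_all
  then show "lcm m n dvd a" "lcm m n dvd b"
    using a b by (simp_all add: lcm_least)
qed

lemma diagonal_filled_cells_inj_mod:
  fixes m n d :: nat
  assumes diagonal: "is_diagonal_array (lcm m n) d B" and d: "d \<le> gcd m n"
  shows "inj_on (map_prod (\<lambda>i. i mod m) (\<lambda>j. j mod n)) (filled_cells (lcm m n) B)"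
proof (rule inj_onI, clarify)
  let ?N = "lcm m n"
  obtain r where r: "\<forall>i<?N. \<forall>j<?N. B i j \<noteq> None \<longleftrightarrow> (\<exists>h<d. on_diagonal ?N (r + int h) i j)"
    using diagonal unfolding is_diagonal_array_def by blast
  fix i j i' j'
  assume "(i, j) \<in> filled_cells ?N B" "(i', j') \<in> filled_cells ?N B"
    and mods: "map_prod (\<lambda>i. i mod m) (\<lambda>j. j mod n) (i, j) = map_prod (\<lambda>i. i mod m) (\<lambda>j. j mod n) (i', j')"
  then have bounds: "i < ?N" "j < ?N" "i' < ?N" "j' < ?N" and "B i j \<noteq> None" "B i' j' \<noteq> None"
    unfolding filled_cells_def by auto
  then obtain h h' where h: "h < d" "h' < d"
    and on_diag: "on_diagonal ?N (r + int h) i j" "on_diagonal ?N (r + int h') i' j'"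
    using r by blast
  have di: "int m dvd int i - int i'" and dj: "int n dvd int j - int j'"
    using mods by (simp_all add: mod_eq_dvd_iff [symmetric] flip: of_nat_mod)
  have "int ?N dvd (int j - int i) - (r + int h)" "int ?N dvd (int j' - int i') - (r + int h')"
    using on_diag unfolding on_diagonal_def by (simp_all add: mod_eq_dvd_iff)
  then have "int ?N dvd ((int j - int i) - (r + int h)) - ((int j' - int i') - (r + int h'))"
    by (rule dvd_diff)
  then have along: "lcm (int m) (int n) dvd (int j - int j') - (int i - int i') - (int h - int h')"
    by (simp add: algebra_simps lcm_int_int_eq)
  have "int (gcd m n) dvd int h - int h'"
    using gcd_dvd_if_lcm_dvd_diff[OF di dj along] by (simp add: gcd_int_int_eq)
  moreover have "\<bar>int h - int h'\<bar> < int (gcd m n)"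
    using h d by linarith
  ultimately have "h = h'"
    using dvd_abs_less_imp_eq_0 by fastforce
  then have "int ?N dvd int i - int i'" "int ?N dvd int j - int j'"
    using lcm_dvd_if_lcm_dvd_diff[OF di dj] along by (simp_all add: lcm_int_int_eq)
  moreover have "\<bar>int i - int i'\<bar> < int ?N" "\<bar>int j - int j'\<bar> < int ?N"
    using bounds by linarith+
  ultimately show "i = i' \<and> j = j'"
    using dvd_abs_less_imp_eq_0 by fastforce
qed

lemma lcm_gcd_of_balanced:
  fixes m n s k :: nat
  assumes balanced: "m * s = n * k" and "0 < m" "0 < s" "0 < k"
  shows "n * k div gcd s k = lcm m n"
    and "lcm m n div m * gcd s k = s"
    and "lcm m n div n * gcd s k = k"
    and "s \<le> n \<Longrightarrow> gcd s k \<le> gcd m n"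
proof -
  define d where "d = gcd s k"
  have "0 < d" using assms(3) unfolding d_def by simp
  obtain s' k' where s: "s = s' * d" and k: "k = k' * d" and coprime: "coprime s' k'"
    using gcd_coprime_exists[of s k] \<open>0 < d\<close> unfolding d_def by auto
  have "m * s' = n * k'"
    using balanced \<open>0 < d\<close> unfolding s k by simp
  then have "s' dvd n"
    using coprime by (metis coprime_dvd_mult_left_iff dvd_triv_right)
  then obtain u where n: "n = u * s'" by (metis dvd_def mult.commute)
  have m: "m = u * k'"
    using \<open>m * s' = n * k'\<close> assms(3) unfolding n s by simp
  have lcm: "lcm m n = u * k' * s'"
    unfolding m n using coprime by (simp add: lcm_mult_left lcm_coprime coprime_commute)
  have gcd: "gcd m n = u"
    unfolding m n using coprime by (simp add: gcd_mult_left coprime_commute)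
  have "n * k div d = u * k' * s'"
    using \<open>0 < d\<close> unfolding n k by simp
  then show "n * k div d = lcm m n"
    unfolding lcm .
  show "lcm m n div m * d = s" "lcm m n div n * d = k"
    using assms(2,3) unfolding lcm by (simp_all add: m n s k)
  show "d \<le> gcd m n" if "s \<le> n"
    using that assms(3) unfolding gcd by (simp add: n s)
qed

lemma diagonal_magic_set_compress:
  fixes A :: "nat \<Rightarrow> 'a::ab_group_add pf_array" and m n d :: nat
  assumes ms: "magic_set \<Omega> (lcm m n) (lcm m n) d d c A x y"
    and diagonal: "\<forall>t<c. is_diagonal_array (lcm m n) d (A t)"
    and d: "d \<le> gcd m n" and "0 < m" "0 < n"
  shows "magic_set \<Omega> m n (lcm m n div m * d) (lcm m n div n * d) c
           (\<lambda>t. compress (lcm m n) (\<lambda>i. i mod m) (\<lambda>j. j mod n) (A t))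
           (\<Sum>_\<in>{..<lcm m n div m}. x) (\<Sum>_\<in>{..<lcm m n div n}. y)"
proof (rule magic_set_compress[OF ms])
  show "\<forall>i<lcm m n. i mod m < m" "\<forall>j<lcm m n. j mod n < n"
    using \<open>0 < m\<close> \<open>0 < n\<close> by simp_all
  show "\<forall>p<m. card {i. i < lcm m n \<and> i mod m = p} = lcm m n div m"
    "\<forall>q<n. card {j. j < lcm m n \<and> j mod n = q} = lcm m n div n"
    by (simp_all add: card_mod_fibre)
  show "\<forall>t<c. inj_on (map_prod (\<lambda>i. i mod m) (\<lambda>j. j mod n)) (filled_cells (lcm m n) (A t))"
    using diagonal_filled_cells_inj_mod diagonal d by blast
qed

theorem mainTheorem3:
  fixes m n s k c :: nat and \<Omega> :: "'a::ab_group_add set"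
  assumes "0 < m" "0 < n" "0 < s" "0 < k" "0 < c"
    and "2 \<le> s" "s \<le> n" "2 \<le> k" "k \<le> m" "m * s = n * k"
    and "finite \<Omega>" "card \<Omega> = n * k * c"
  shows "(exists_diag_MS \<Omega> ((n * k) div gcd s k) (gcd s k) c \<longrightarrow> exists_MS \<Omega> m n s k c) \<and>
         (exists_diag_MS0 \<Omega> ((n * k) div gcd s k) (gcd s k) c \<longrightarrow> exists_MS0 \<Omega> m n s k c)"
proof -
  note dims = lcm_gcd_of_balanced[OF \<open>m * s = n * k\<close> \<open>0 < m\<close> \<open>0 < s\<close> \<open>0 < k\<close>]
  have "magic_set \<Omega> m n s k c
      (\<lambda>t. compress (lcm m n) (\<lambda>i. i mod m) (\<lambda>j. j mod n) (A t))
      (\<Sum>_\<in>{..<lcm m n div m}. x) (\<Sum>_\<in>{..<lcm m n div n}. y)"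
    if "magic_set \<Omega> (lcm m n) (lcm m n) (gcd s k) (gcd s k) c A x y"
      "\<forall>t<c. is_diagonal_array (lcm m n) (gcd s k) (A t)"
    for A :: "nat \<Rightarrow> 'a pf_array" and x y
    using diagonal_magic_set_compress[OF that dims(4)[OF \<open>s \<le> n\<close>] \<open>0 < m\<close> \<open>0 < n\<close>] dims(2,3)
    by simp
  then show ?thesis
    unfolding exists_diag_MS_def exists_MS_def exists_diag_MS0_def exists_MS0_def dims(1)
    by (metis sum.neutral_const)
qed

end
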